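(* Assume the setting and standing assumptions described in the context. If for some $\Delta\in\mathcal{D}$ the function $\kappa\mapsto\det[-(B\Delta C+\kappa^2J_2+\kappa^4J_4)]$ is initially positive, then there exists $\tilde\kappa>0$ such that $\rho(\Delta,\kappa)<0$ for all $0<\kappa\le\tilde\kappa$.
   Context: Let $n,m\ge 1$, $B\in\mathbb{Z}^{n\times m}$, $C\in\mathbb{Z}^{m\times n}$. Given bounds $0\le \Delta_j^-\le \Delta_j^+<\infty$ ($j=1,\dots,m$), let $\mathcal{D}$ be the set of diagonal matrices $\Delta=\mathrm{diag}(\Delta_1,\dots,\Delta_m)$ with $\Delta_j^-\le\Delta_j\le\Delta_j^+$. Let $J_2,J_4\in\mathbb{R}^{n\times n}$ be symmetric, with $J_2$ indefinite, $J_4$ negative semidefinite, and such that there exists $\bar\kappa$ with $\bar\kappa^2J_2+\bar\kappa^4J_4$ negative definite. Assumption: for every $\Delta\in\mathcal{D}$, $B\Delta C$ is singular and has $n-1$ eigenvalues (with multiplicity) with negative real part, and there is a nonzero $v\ge0$ with $v^\top B=0$. For real $\kappa\ge0$, $\rho(\Delta,\kappa)$ denotes the spectral abscissa (maximum real part of the eigenvalues) of $B\Delta C+\kappa^2J_2+\kappa^4J_4$. A function $f$ on $[0,\infty)$ is initially positive if there is $\hat\kappa>0$ with $f(\kappa)>0$ for all $\kappa\in(0,\hat\kappa)$. *)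

theory Defs
  imports "Jordan_Normal_Form.Jordan_Normal_Form"
begin

definition sym_mat :: "nat \<Rightarrow> real mat \<Rightarrow> bool" where
  "sym_mat n A \<longleftrightarrow> A \<in> carrier_mat n n \<and> transpose_mat A = A"

definition neg_semidef :: "nat \<Rightarrow> real mat \<Rightarrow> bool" where
  "neg_semidef n A \<longleftrightarrow> sym_mat n A \<and> (\<forall>x \<in> carrier_vec n. x \<bullet> (A *\<^sub>v x) \<le> 0)"

definition neg_def :: "nat \<Rightarrow> real mat \<Rightarrow> bool" where
  "neg_def n A \<longleftrightarrow> sym_mat n A \<and> (\<forall>x \<in> carrier_vec n. x \<noteq> 0\<^sub>v n \<longrightarrow> x \<bullet> (A *\<^sub>v x) < 0)"

definition indefinite :: "nat \<Rightarrow> real mat \<Rightarrow> bool" where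
  "indefinite n A \<longleftrightarrow> sym_mat n A \<and>
     (\<exists>x \<in> carrier_vec n. x \<bullet> (A *\<^sub>v x) > 0) \<and> (\<exists>y \<in> carrier_vec n. y \<bullet> (A *\<^sub>v y) < 0)"

definition cmat :: "real mat \<Rightarrow> complex mat" where
  "cmat A = map_mat complex_of_real A"

definition alg_mult :: "real mat \<Rightarrow> complex \<Rightarrow> nat" where
  "alg_mult A z = order z (char_poly (cmat A))"

definition num_neg_re_eigs :: "real mat \<Rightarrow> nat" where
  "num_neg_re_eigs A = (\<Sum>z \<in> {z. eigenvalue (cmat A) z \<and> Re z < 0}. alg_mult A z)"

definition spectral_abscissa :: "real mat \<Rightarrow> real" where
  "spectral_abscissa A = Max (Re ` {z. eigenvalue (cmat A) z})"

definition Dset :: "nat \<Rightarrow> (nat \<Rightarrow> real) \<Rightarrow> (nat \<Rightarrow> real) \<Rightarrow> real mat set" where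
  "Dset m lo hi = {D. D \<in> carrier_mat m m \<and> diagonal_mat D \<and> (\<forall>j<m. lo j \<le> D $$ (j,j) \<and> D $$ (j,j) \<le> hi j)}"

definition Mk :: "int mat \<Rightarrow> int mat \<Rightarrow> real mat \<Rightarrow> real mat \<Rightarrow> real mat \<Rightarrow> real \<Rightarrow> real mat" where
  "Mk B C J2 J4 D k = map_mat of_int B * D * map_mat of_int C + (k^2) \<cdot>\<^sub>m J2 + (k^4) \<cdot>\<^sub>m J4"

definition rho :: "int mat \<Rightarrow> int mat \<Rightarrow> real mat \<Rightarrow> real mat \<Rightarrow> real mat \<Rightarrow> real \<Rightarrow> real" where
  "rho B C J2 J4 D k = spectral_abscissa (Mk B C J2 J4 D k)"

definition initially_positive :: "(real \<Rightarrow> real) \<Rightarrow> bool" where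
  "initially_positive f \<longleftrightarrow> (\<exists>kh > 0. \<forall>k. 0 < k \<and> k < kh \<longrightarrow> f k > 0)"

end

theory Submission
  imports Defs "Jordan_Normal_Form.Spectral_Radius" "HOL-Library.Infinite_Set"
begin

text \<open>
  At \<open>\<kappa> = 0\<close> the characteristic polynomial \<open>p\<^sub>0\<close> of \<open>M(\<kappa>) = B\<Delta>C + \<kappa>\<^sup>2J\<^sub>2 + \<kappa>\<^sup>4J\<^sub>4\<close> has a simple
  root at \<open>0\<close> and all its other roots in the open left half-plane; moreover \<open>p\<^sub>0'(0) > 0\<close>, since
  \<open>p\<^sub>0(x)/x\<close> is monic without nonnegative real roots. The coefficients of \<open>p\<^sub>\<kappa>\<close> depend
  continuously on \<open>\<kappa>\<close>, so by compactness any root of \<open>p\<^sub>\<kappa>\<close> with nonnegative real part must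
  tend to a root of \<open>p\<^sub>0\<close> with nonnegative real part, i.e. to \<open>0\<close>. Near \<open>0\<close>, however,
  \<open>p\<^sub>\<kappa>(z) = 0\<close> forces \<open>z \<approx> -p\<^sub>\<kappa>(0)/p\<^sub>0'(0)\<close>, and \<open>p\<^sub>\<kappa>(0) = det(-M(\<kappa>)) > 0\<close> for small
  \<open>\<kappa> > 0\<close>: the root lies in the open left half-plane after all.
\<close>

section \<open>Roots of polynomials\<close>

lemma poly_eq_sum_upto:
  fixes p :: "'a::comm_semiring_1 poly"
  shows "degree p \<le> n \<Longrightarrow> poly p x = (\<Sum>i\<le>n. coeff p i * x ^ i)"
  by (subst poly_as_sum_of_monoms'[symmetric]) (auto simp: poly_sum poly_monom)

lemma degree_poly_shift: "degree (poly_shift k p) = degree p - k"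
proof (cases "p \<noteq> 0 \<and> k \<le> degree p")
  case True
  show ?thesis
  proof (rule antisym)
    show "degree (poly_shift k p) \<le> degree p - k"
      by (rule degree_le) (simp add: coeff_poly_shift coeff_eq_0)
    show "degree p - k \<le> degree (poly_shift k p)"
      using True by (intro le_degree) (simp add: coeff_poly_shift)
  qed
next
  case False
  then have "poly_shift k p = 0"
    by (auto simp: poly_eq_iff coeff_poly_shift coeff_eq_0)
  with False show ?thesis by auto
qed

lemma poly_eq_coeff_0_plus_poly_shift:
  "poly p x = coeff p 0 + x * poly (poly_shift 1 p) x"
proof -
  have "pCons (coeff p 0) (poly_shift 1 p) = p"
    by (rule poly_eqI) (simp add: coeff_pCons coeff_poly_shift split: nat.split)
  then show ?thesis by (metis poly_pCons)
qed

lemma norm_root_le_monic: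
  fixes p :: "'a::real_normed_field poly"
  assumes deg: "degree p = d" and monic: "coeff p d = 1"
    and bound: "\<And>i. i < d \<Longrightarrow> norm (coeff p i) \<le> K"
    and root: "poly p z = 0"
  shows "norm z \<le> max 1 (real d * K)"
proof (rule ccontr)
  assume "\<not> ?thesis"
  then have z1: "norm z > 1" and zK: "norm z > real d * K" by auto
  have "d > 0"
    using deg monic root by (cases d) (auto simp: poly_altdef)
  have "poly p z = (\<Sum>i<d. coeff p i * z ^ i) + z ^ d"
    using deg monic by (simp add: poly_altdef lessThan_Suc_atMost[symmetric])
  then have "z ^ d = - (\<Sum>i<d. coeff p i * z ^ i)"
    using root by (simp add: eq_neg_iff_add_eq_0 add.commute)
  then have "norm z ^ d = norm (\<Sum>i<d. coeff p i * z ^ i)"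
    by (metis norm_minus_cancel norm_power)
  also have "\<dots> \<le> (\<Sum>i<d. norm (coeff p i) * norm z ^ i)"
    by (rule order.trans[OF norm_sum]) (simp add: norm_mult norm_power)
  also have "\<dots> \<le> (\<Sum>i<d. K * norm z ^ (d - 1))"
  proof (rule sum_mono)
    fix i assume "i \<in> {..<d}"
    then show "norm (coeff p i) * norm z ^ i \<le> K * norm z ^ (d - 1)"
      using bound[of i] z1 by (intro mult_mono power_increasing) (auto intro: order_trans[OF norm_ge_zero])
  qed
  also have "\<dots> = real d * K * norm z ^ (d - 1)" by simp
  finally have "norm z * norm z ^ (d - 1) \<le> real d * K * norm z ^ (d - 1)"
    using \<open>d > 0\<close> by (simp add: power_eq_if)
  moreover have "norm z ^ (d - 1) > 0" using z1 by (intro zero_less_power) linarith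
  ultimately have "norm z \<le> real d * K" by (simp add: mult_le_cancel_right)
  with zK show False by simp
qed

lemma coeff_1_pos_if_no_positive_roots:
  fixes p :: "real poly"
  assumes lc: "lead_coeff p > 0" and p0: "poly p 0 = 0" and p1: "coeff p 1 \<noteq> 0"
    and roots: "\<And>x. x > 0 \<Longrightarrow> poly p x \<noteq> 0"
  shows "coeff p 1 > 0"
proof (rule ccontr)
  define q where "q = poly_shift 1 p"
  assume "\<not> coeff p 1 > 0"
  with p1 have "poly q 0 < 0"
    by (simp add: q_def poly_0_coeff_0 coeff_poly_shift)
  have "degree p \<ge> 1"
    using p1 by (auto intro: le_degree)
  then have "lead_coeff q = lead_coeff p"
    by (simp add: q_def degree_poly_shift coeff_poly_shift)
  then obtain X where X: "\<And>x. x \<ge> X \<Longrightarrow> poly q x \<ge> lead_coeff p"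
    using poly_pinfty_gt_lc[of q] lc by auto
  have "poly q (max 1 X) > 0"
    using X[of "max 1 X"] lc by simp
  moreover have "(0::real) < max 1 X" by simp
  ultimately obtain x where "x > 0" "poly q x = 0"
    using poly_IVT_pos[of 0 "max 1 X" q] \<open>poly q 0 < 0\<close> by blast
  moreover have "poly p x = x * poly q x"
    using poly_eq_coeff_0_plus_poly_shift[of p x] p0 by (simp add: q_def poly_0_coeff_0)
  ultimately show False
    using roots by simp
qed

lemma simple_zero_if_other_roots_in_left_half_plane:
  fixes p :: "complex poly"
  assumes p: "p \<noteq> 0" and zero: "poly p 0 = 0"
    and count: "(\<Sum>z\<in>{z. poly p z = 0 \<and> Re z < 0}. order z p) = degree p - 1"
  shows "coeff p 1 \<noteq> 0" and "\<And>z. poly p z = 0 \<Longrightarrow> Re z \<ge> 0 \<Longrightarrow> z = 0"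
proof -
  define S where "S = {z. poly p z = 0}"
  define R where "R = S - {z. Re z < 0}"
  have fin: "finite S"
    unfolding S_def using p by (rule poly_roots_finite)
  have "(\<Sum>z\<in>S. order z p) = (\<Sum>z\<in>S \<inter> {z. Re z < 0}. order z p) + (\<Sum>z\<in>R. order z p)"
    unfolding R_def using fin by (rule sum.Int_Diff)
  moreover have "(\<Sum>z\<in>S \<inter> {z. Re z < 0}. order z p) = degree p - 1"
    using count by (simp add: S_def Collect_conj_eq)
  moreover have "(\<Sum>z\<in>S. order z p) \<le> degree p"
    unfolding S_def using p by (rule order_sum_degree)
  ultimately have R_le_1: "(\<Sum>z\<in>R. order z p) \<le> 1"
    by linarith
  have ord_pos: "order z p \<ge> 1" if "z \<in> R" for z
    using that order_gt_0_iff[OF p] by (simp add: R_def S_def Suc_le_eq)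
  have "0 \<in> R"
    using zero by (simp add: R_def S_def)
  have "order 0 p \<le> 1"
    using member_le_sum[OF \<open>0 \<in> R\<close>, of "\<lambda>z. order z p"] fin R_le_1 by (simp add: R_def)
  then have "\<not> monom 1 2 dvd p"
    using monom_1_dvd_iff[OF p, of 2] by simp
  then show "coeff p 1 \<noteq> 0"
    using zero by (auto simp: monom_1_dvd_iff' poly_0_coeff_0 less_2_cases_iff)
  show "z = 0" if "poly p z = 0" "Re z \<ge> 0" for z
  proof (rule ccontr)
    assume "z \<noteq> 0"
    have "z \<in> R"
      using that by (simp add: R_def S_def)
    have "(\<Sum>w\<in>{0,z}. order w p) \<le> (\<Sum>w\<in>R. order w p)"
      using fin \<open>0 \<in> R\<close> \<open>z \<in> R\<close> by (intro sum_mono2) (auto simp: R_def)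
    with \<open>z \<noteq> 0\<close> R_le_1 ord_pos[OF \<open>0 \<in> R\<close>] ord_pos[OF \<open>z \<in> R\<close>] show False
      by simp
  qed
qed

lemma Re_neg_if_mult_eq_neg_of_real:
  assumes "z * w = - of_real c" "c > 0" "Re w > 0"
  shows "Re z < 0"
proof -
  have "w \<noteq> 0" using assms(3) by auto
  then have "z = - of_real c / w" using assms(1) by (simp add: field_simps)
  then have "Re z = - (c * Re w) / (cmod w)\<^sup>2" by (simp add: Re_divide cmod_power2)
  moreover have "(cmod w)\<^sup>2 > 0" using \<open>w \<noteq> 0\<close> by simp
  ultimately show ?thesis using assms(2,3) by (simp add: divide_neg_pos)
qed

section \<open>Coefficientwise convergence of polynomials\<close>

definition coeffs_tendsto :: "('b \<Rightarrow> 'a::{zero,topological_space} poly) \<Rightarrow> 'a poly \<Rightarrow> 'b filter \<Rightarrow> bool" where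
  "coeffs_tendsto p q F \<longleftrightarrow> (\<forall>k. ((\<lambda>t. coeff (p t) k) \<longlongrightarrow> coeff q k) F)"

lemma coeffs_tendsto_const: "coeffs_tendsto (\<lambda>t. q) q F"
  unfolding coeffs_tendsto_def by simp

lemma coeffs_tendsto_const_poly:
  "(g \<longlongrightarrow> c) F \<Longrightarrow> coeffs_tendsto (\<lambda>t. [:g t:]) [:c:] F"
  unfolding coeffs_tendsto_def by (auto simp: coeff_pCons split: nat.split)

lemma coeffs_tendsto_add:
  fixes p :: "'b \<Rightarrow> 'a::topological_comm_monoid_add poly"
  shows "coeffs_tendsto p q F \<Longrightarrow> coeffs_tendsto p' q' F \<Longrightarrow> coeffs_tendsto (\<lambda>t. p t + p' t) (q + q') F"
  unfolding coeffs_tendsto_def by (auto intro: tendsto_add)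

lemma coeffs_tendsto_mult:
  fixes p :: "'b \<Rightarrow> 'a::{comm_semiring_0,topological_semigroup_mult,topological_comm_monoid_add} poly"
  shows "coeffs_tendsto p q F \<Longrightarrow> coeffs_tendsto p' q' F \<Longrightarrow> coeffs_tendsto (\<lambda>t. p t * p' t) (q * q') F"
  unfolding coeffs_tendsto_def coeff_mult by (intro allI tendsto_sum tendsto_mult) auto

lemma coeffs_tendsto_sum:
  fixes p :: "'i \<Rightarrow> 'b \<Rightarrow> 'a::topological_comm_monoid_add poly"
  shows "(\<And>i. i \<in> I \<Longrightarrow> coeffs_tendsto (p i) (q i) F) \<Longrightarrow>
    coeffs_tendsto (\<lambda>t. \<Sum>i\<in>I. p i t) (\<Sum>i\<in>I. q i) F"
  unfolding coeffs_tendsto_def coeff_sum by (intro allI tendsto_sum) auto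

lemma coeffs_tendsto_prod:
  fixes p :: "'i \<Rightarrow> 'b \<Rightarrow> 'a::{comm_semiring_1,topological_semigroup_mult,topological_comm_monoid_add} poly"
  shows "(\<And>i. i \<in> I \<Longrightarrow> coeffs_tendsto (p i) (q i) F) \<Longrightarrow>
    coeffs_tendsto (\<lambda>t. \<Prod>i\<in>I. p i t) (\<Prod>i\<in>I. q i) F"
  by (induction I rule: infinite_finite_induct) (auto intro: coeffs_tendsto_mult coeffs_tendsto_const)

lemma coeffs_tendsto_char_poly:
  fixes A :: "'b \<Rightarrow> 'a::{comm_ring_1,topological_semigroup_mult,topological_ab_group_add} mat"
  assumes A: "\<And>t. A t \<in> carrier_mat n n" and A0: "A0 \<in> carrier_mat n n"
    and lim: "\<And>i j. i < n \<Longrightarrow> j < n \<Longrightarrow> ((\<lambda>t. A t $$ (i,j)) \<longlongrightarrow> A0 $$ (i,j)) F"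
  shows "coeffs_tendsto (\<lambda>t. char_poly (A t)) (char_poly A0) F"
proof -
  have entry: "coeffs_tendsto (\<lambda>t. char_poly_matrix (A t) $$ (i,j)) (char_poly_matrix A0 $$ (i,j)) F"
    if "i < n" "j < n" for i j
  proof -
    have entry_eq: "char_poly_matrix X $$ (i,j) = (if i = j then [:0,1:] else 0) + [:- X $$ (i,j):]"
      if "X \<in> carrier_mat n n" for X
      using that \<open>i < n\<close> \<open>j < n\<close> by (auto simp: char_poly_matrix_def)
    show ?thesis
      unfolding entry_eq[OF A] entry_eq[OF A0]
      by (intro coeffs_tendsto_add coeffs_tendsto_const coeffs_tendsto_const_poly tendsto_minus
          lim that)
  qed
  show ?thesis
    using A A0 unfolding char_poly_def
    by (auto simp: det_def'[of _ n] permutes_def intro!: coeffs_tendsto_sum coeffs_tendsto_mult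
        coeffs_tendsto_const coeffs_tendsto_prod entry)
qed

lemma coeffs_tendsto_of_real:
  fixes p :: "'b \<Rightarrow> real poly"
  shows "coeffs_tendsto p q F \<Longrightarrow>
    coeffs_tendsto (\<lambda>t. map_poly of_real (p t)) (map_poly (of_real :: real \<Rightarrow> 'a::real_normed_algebra_1) q) F"
  unfolding coeffs_tendsto_def by (auto simp: coeff_map_poly intro: tendsto_of_real)

lemma coeffs_tendsto_poly_shift:
  "coeffs_tendsto p q F \<Longrightarrow> coeffs_tendsto (\<lambda>t. poly_shift k (p t)) (poly_shift k q) F"
  unfolding coeffs_tendsto_def by (simp add: coeff_poly_shift)

lemma coeffs_tendsto_subseq:
  "coeffs_tendsto p q sequentially \<Longrightarrow> strict_mono r \<Longrightarrow> coeffs_tendsto (\<lambda>j. p (r j)) q sequentially"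
  unfolding coeffs_tendsto_def using LIMSEQ_subseq_LIMSEQ by (fastforce simp: o_def)

lemma degree_le_if_coeffs_tendsto:
  fixes p :: "'b \<Rightarrow> 'a::{zero,t2_space} poly"
  assumes "coeffs_tendsto p q F" "F \<noteq> bot" "\<And>t. degree (p t) \<le> n"
  shows "degree q \<le> n"
proof (rule degree_le, intro allI impI)
  fix k assume "n < k"
  then have "coeff (p t) k = 0" for t
    using assms(3)[of t] by (intro coeff_eq_0) simp
  then have "((\<lambda>t. coeff (p t) k) \<longlongrightarrow> 0) F" by simp
  with assms(1,2) show "coeff q k = 0"
    unfolding coeffs_tendsto_def by (blast intro: tendsto_unique)
qed

lemma tendsto_poly_coeffs_tendsto:
  fixes p :: "'b \<Rightarrow> 'a::real_normed_field poly"
  assumes lim: "coeffs_tendsto p q F" and deg: "\<And>t. degree (p t) \<le> n" and z: "(z \<longlongrightarrow> w) F"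
  shows "((\<lambda>t. poly (p t) (z t)) \<longlongrightarrow> poly q w) F"
proof (cases "F = bot")
  case False
  then have "degree q \<le> n"
    by (rule degree_le_if_coeffs_tendsto[OF lim _ deg])
  moreover have "((\<lambda>t. \<Sum>i\<le>n. coeff (p t) i * z t ^ i) \<longlongrightarrow> (\<Sum>i\<le>n. coeff q i * w ^ i)) F"
    using lim z unfolding coeffs_tendsto_def by (intro tendsto_intros) auto
  moreover have "poly (p t) x = (\<Sum>i\<le>n. coeff (p t) i * x ^ i)" for t x
    using deg by (rule poly_eq_sum_upto)
  ultimately show ?thesis
    by (simp add: poly_eq_sum_upto)
qed simp

lemma bounded_roots_if_coeffs_tendsto:
  fixes p :: "nat \<Rightarrow> 'a::real_normed_field poly"
  assumes lim: "coeffs_tendsto p q sequentially"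
    and deg: "\<And>j. degree (p j) = n" and monic: "\<And>j. coeff (p j) n = 1"
    and root: "\<And>j. poly (p j) (z j) = 0"
  obtains R where "\<And>j. norm (z j) \<le> R"
proof -
  have "(\<lambda>j. \<Sum>i<n. norm (coeff (p j) i)) \<longlonglongrightarrow> (\<Sum>i<n. norm (coeff q i))"
    using lim unfolding coeffs_tendsto_def by (intro tendsto_intros) auto
  then have "Bseq (\<lambda>j. \<Sum>i<n. norm (coeff (p j) i))"
    by (intro convergent_imp_Bseq convergentI)
  then obtain K where K: "\<And>j. norm (\<Sum>i<n. norm (coeff (p j) i)) \<le> K"
    unfolding Bseq_def by auto
  have "norm (coeff (p j) i) \<le> K" if "i < n" for i j
    using member_le_sum[of i "{..<n}" "\<lambda>i. norm (coeff (p j) i)"] K[of j] that by simp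
  then show thesis
    using norm_root_le_monic[OF deg monic _ root] that by blast
qed

lemma convergent_subseq_roots_if_coeffs_tendsto:
  fixes p :: "nat \<Rightarrow> complex poly"
  assumes lim: "coeffs_tendsto p q sequentially"
    and deg: "\<And>j. degree (p j) = n" and monic: "\<And>j. coeff (p j) n = 1"
    and root: "\<And>j. poly (p j) (z j) = 0"
  obtains r L where "strict_mono r" "(\<lambda>j. z (r j)) \<longlonglongrightarrow> L" "poly q L = 0"
proof -
  obtain R where "\<And>j. cmod (z j) \<le> R"
    using bounded_roots_if_coeffs_tendsto[OF lim deg monic root] by blast
  then obtain r L where r: "strict_mono r" and zL: "(\<lambda>j. z (r j)) \<longlonglongrightarrow> L"
    using Bolzano_Weierstrass_complex_disc[of z R] unfolding LIMSEQ_iff by blast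
  have "(\<lambda>j. poly (p (r j)) (z (r j))) \<longlonglongrightarrow> poly q L"
    using coeffs_tendsto_subseq[OF lim r] deg zL by (intro tendsto_poly_coeffs_tendsto) auto
  then have "poly q L = 0"
    using root by (simp add: LIMSEQ_const_iff)
  with r zL show thesis by (rule that)
qed

lemma eventually_Re_neg_roots_near_simple_zero:
  fixes p :: "'b \<Rightarrow> real poly"
  assumes lim: "coeffs_tendsto p q F" and deg: "\<And>t. degree (p t) \<le> n"
    and z: "(z \<longlongrightarrow> 0) F" "\<forall>\<^sub>F t in F. poly (map_poly of_real (p t)) (z t) = 0"
    and pos: "\<forall>\<^sub>F t in F. coeff (p t) 0 > 0" "coeff q 1 > 0"
  shows "\<forall>\<^sub>F t in F. Re (z t) < 0"
proof -
  \<comment> \<open>\<open>p(z) = p(0) + z w\<close> with \<open>w\<close> close to \<open>p'(0) > 0\<close>, so \<open>z = -p(0)/w\<close> lies in the left half-plane.\<close>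
  define w where "w t = poly (poly_shift 1 (map_poly complex_of_real (p t))) (z t)" for t
  have "degree (poly_shift 1 (map_poly complex_of_real (p t))) \<le> n" for t
    using deg[of t] by (simp add: degree_poly_shift of_real_hom.degree_map_poly_hom)
  then have "(w \<longlongrightarrow> poly (poly_shift 1 (map_poly complex_of_real q)) 0) F"
    unfolding w_def using coeffs_tendsto_poly_shift[OF coeffs_tendsto_of_real[OF lim]] z(1)
    by (intro tendsto_poly_coeffs_tendsto)
  moreover have "poly (poly_shift 1 (map_poly complex_of_real q)) 0 = of_real (coeff q 1)"
    by (simp add: poly_0_coeff_0 coeff_poly_shift coeff_map_poly)
  ultimately have "((\<lambda>t. Re (w t)) \<longlongrightarrow> coeff q 1) F"
    using tendsto_Re by fastforce
  then have "\<forall>\<^sub>F t in F. Re (w t) > 0"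
    using pos(2) by (rule order_tendstoD)
  with z(2) pos(1) show ?thesis
  proof eventually_elim
    case (elim t)
    have "poly (map_poly complex_of_real (p t)) (z t) = of_real (coeff (p t) 0) + z t * w t"
      unfolding w_def by (subst poly_eq_coeff_0_plus_poly_shift) (simp add: coeff_map_poly)
    with elim have "z t * w t = - of_real (coeff (p t) 0)"
      by (simp add: eq_neg_iff_add_eq_0 add.commute)
    with elim show ?case by (intro Re_neg_if_mult_eq_neg_of_real) auto
  qed
qed

lemma eventually_roots_in_left_half_plane:
  fixes p :: "nat \<Rightarrow> real poly"
  assumes lim: "coeffs_tendsto p q sequentially"
    and deg: "\<And>j. degree (p j) = n" and monic: "\<And>j. coeff (p j) n = 1"
    and q_roots: "\<And>z. poly (map_poly of_real q) z = 0 \<Longrightarrow> Re z \<ge> 0 \<Longrightarrow> z = 0"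
    and q1: "coeff q 1 > 0" and p0: "\<forall>\<^sub>F j in sequentially. coeff (p j) 0 > 0"
  shows "\<forall>\<^sub>F j in sequentially. \<forall>z. poly (map_poly of_real (p j)) z = 0 \<longrightarrow> Re z < 0"
proof (rule ccontr)
  let ?P = "\<lambda>j. map_poly complex_of_real (p j)"
  assume "\<not> ?thesis"
  then have "\<exists>\<^sub>F j in sequentially. coeff (p j) 0 > 0 \<and> (\<exists>z. poly (?P j) z = 0 \<and> Re z \<ge> 0)"
    using p0 by (auto simp: not_eventually not_less intro: frequently_eventually_conj)
  then have "infinite {j. coeff (p j) 0 > 0 \<and> (\<exists>z. poly (?P j) z = 0 \<and> Re z \<ge> 0)}"
    unfolding cofinite_eq_sequentially[symmetric] frequently_cofinite .
  from infinite_enumerate[OF this] obtain r :: "nat \<Rightarrow> nat" where r: "strict_mono r"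
    and "\<forall>j. coeff (p (r j)) 0 > 0 \<and> (\<exists>z. poly (?P (r j)) z = 0 \<and> Re z \<ge> 0)"
    by blast
  then obtain z where pos: "\<And>j. coeff (p (r j)) 0 > 0"
    and root: "\<And>j. poly (?P (r j)) (z j) = 0" and Re_z: "\<And>j. Re (z j) \<ge> 0"
    by metis
  have lim_r: "coeffs_tendsto (\<lambda>j. p (r j)) q sequentially"
    using lim r by (rule coeffs_tendsto_subseq)
  have "degree (?P (r j)) = n" "coeff (?P (r j)) n = 1" for j
    using deg monic by (simp_all add: of_real_hom.degree_map_poly_hom coeff_map_poly)
  then obtain s L where s: "strict_mono s" and zL: "(\<lambda>j. z (s j)) \<longlonglongrightarrow> L"
    and "poly (map_poly of_real q) L = 0"
    using convergent_subseq_roots_if_coeffs_tendsto[OF coeffs_tendsto_of_real[OF lim_r] _ _ root]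
    by blast
  moreover have "Re L \<ge> 0"
    using tendsto_Re[OF zL] Re_z by (auto intro: LIMSEQ_le_const)
  ultimately have "(\<lambda>j. z (s j)) \<longlonglongrightarrow> 0"
    using q_roots by auto
  then have "\<forall>\<^sub>F j in sequentially. Re (z (s j)) < 0"
    using coeffs_tendsto_subseq[OF lim_r s] deg root pos q1
    by (intro eventually_Re_neg_roots_near_simple_zero[where n = n]) auto
  then show False
    using Re_z by (auto simp: eventually_sequentially not_less[symmetric])
qed

section \<open>Spectra of perturbed real matrices\<close>

lemma char_matrix_0: "A \<in> carrier_mat n n \<Longrightarrow> char_matrix A 0 = A"
  by (rule eq_matI) (auto simp: char_matrix_def)

lemma coeff_0_char_poly: "(A :: 'a::field mat) \<in> carrier_mat n n \<Longrightarrow> coeff (char_poly A) 0 = det (- A)"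
  by (simp add: poly_0_coeff_0[symmetric] char_poly_matrix char_matrix_0)

lemma poly_char_poly_0_eq_0_iff: "(A :: 'a::field mat) \<in> carrier_mat n n \<Longrightarrow> poly (char_poly A) 0 = 0 \<longleftrightarrow> det A = 0"
  by (simp add: eigenvalue_root_char_poly[symmetric] eigenvalue_det char_matrix_0)

lemma eigenvalue_cmat_iff:
  "A \<in> carrier_mat n n \<Longrightarrow> eigenvalue (cmat A) z \<longleftrightarrow> poly (map_poly of_real (char_poly A)) z = 0"
  unfolding cmat_def
  by (simp add: eigenvalue_root_char_poly[of _ n] of_real_hom.char_poly_hom[symmetric])

lemma char_poly_of_singular_with_stable_rest:
  fixes A :: "real mat"
  assumes A: "A \<in> carrier_mat n n" and sing: "det A = 0" and neg: "num_neg_re_eigs A = n - 1"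
  shows "\<And>z. poly (map_poly of_real (char_poly A)) z = 0 \<Longrightarrow> Re z \<ge> 0 \<Longrightarrow> z = 0"
    and "coeff (char_poly A) 1 > 0"
proof -
  let ?p = "char_poly A"
  let ?P = "map_poly complex_of_real ?p"
  have deg: "degree ?p = n" and monic: "coeff ?p n = 1"
    using degree_monic_char_poly[OF A] by auto
  then have P: "?P \<noteq> 0" and deg_P: "degree ?P = n"
    by (auto simp: of_real_hom.degree_map_poly_hom)
  have p0: "poly ?p 0 = 0"
    using poly_char_poly_0_eq_0_iff[OF A] sing by simp
  then have P0: "poly ?P 0 = 0"
    by simp
  have "(\<Sum>z\<in>{z. poly ?P z = 0 \<and> Re z < 0}. order z ?P) = degree ?P - 1"
    using neg deg_P unfolding num_neg_re_eigs_def alg_mult_def eigenvalue_cmat_iff[OF A]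
    by (simp add: cmat_def of_real_hom.char_poly_hom[OF A])
  note simple = simple_zero_if_other_roots_in_left_half_plane[OF P P0 this]
  show roots: "\<And>z. poly ?P z = 0 \<Longrightarrow> Re z \<ge> 0 \<Longrightarrow> z = 0"
    by (rule simple(2))
  have "coeff ?p 1 \<noteq> 0"
    using simple(1) by (simp add: coeff_map_poly)
  moreover have "poly ?p x \<noteq> 0" if "x > 0" for x
    using roots[of "of_real x"] that by auto
  ultimately show "coeff ?p 1 > 0"
    using deg monic p0 by (intro coeff_1_pos_if_no_positive_roots) auto
qed

lemma spectral_abscissa_neg_if_roots_Re_neg:
  assumes A: "A \<in> carrier_mat n n" and "n > 0"
    and roots: "\<And>z. poly (map_poly of_real (char_poly A)) z = 0 \<Longrightarrow> Re z < 0"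
  shows "spectral_abscissa A < 0"
proof -
  have cA: "cmat A \<in> carrier_mat n n"
    using A by (simp add: cmat_def)
  have "finite (spectrum (cmat A))" "spectrum (cmat A) \<noteq> {}"
    using card_finite_spectrum(1)[OF cA] spectrum_non_empty[OF cA \<open>n > 0\<close>] by auto
  then have "Max (Re ` spectrum (cmat A)) \<in> Re ` spectrum (cmat A)"
    by (intro Max_in) auto
  then show ?thesis
    unfolding spectral_abscissa_def spectrum_def[symmetric] using roots
    by (auto simp: spectrum_def eigenvalue_cmat_iff[OF A])
qed

lemma eventually_spectral_abscissa_neg:
  fixes A :: "real \<Rightarrow> real mat"
  assumes "n > 0" and A: "\<And>t. A t \<in> carrier_mat n n" and A0: "A0 \<in> carrier_mat n n"
    and lim: "\<And>i j. i < n \<Longrightarrow> j < n \<Longrightarrow> ((\<lambda>t. A t $$ (i,j)) \<longlongrightarrow> A0 $$ (i,j)) (at_right 0)"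
    and sing: "det A0 = 0" and neg: "num_neg_re_eigs A0 = n - 1"
    and det_pos: "\<forall>\<^sub>F t in at_right 0. det (- A t) > 0"
  shows "\<forall>\<^sub>F t in at_right 0. spectral_abscissa (A t) < 0"
proof -
  have "\<forall>\<^sub>F t in at_right 0. \<forall>z. poly (map_poly of_real (char_poly (A t))) z = 0 \<longrightarrow> Re z < 0"
  proof (rule sequentially_imp_eventually_within, safe)
    fix f :: "nat \<Rightarrow> real"
    assume "\<forall>j. f j \<in> {0<..} \<and> f j \<noteq> 0" "f \<longlonglongrightarrow> 0"
    then have f: "filterlim f (at_right 0) sequentially"
      by (auto simp: filterlim_at)
    have "coeffs_tendsto (\<lambda>j. char_poly (A (f j))) (char_poly A0) sequentially"
      using A A0 by (intro coeffs_tendsto_char_poly filterlim_compose[OF lim f])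
    moreover have "\<forall>\<^sub>F j in sequentially. coeff (char_poly (A (f j))) 0 > 0"
      using filterlim_iff[THEN iffD1, OF f, rule_format, OF det_pos]
      by (simp add: coeff_0_char_poly[OF A])
    ultimately show "\<forall>\<^sub>F j in sequentially. \<forall>z. poly (map_poly of_real (char_poly (A (f j)))) z = 0 \<longrightarrow> Re z < 0"
      using degree_monic_char_poly[OF A] char_poly_of_singular_with_stable_rest[OF A0 sing neg]
      by (intro eventually_roots_in_left_half_plane[where n = n]) auto
  qed
  then show ?thesis
    by eventually_elim (intro spectral_abscissa_neg_if_roots_Re_neg[OF A \<open>n > 0\<close>], blast)
qed

theorem lemma2:
  fixes n m :: nat and B C :: "int mat" and lo hi :: "nat \<Rightarrow> real" and J2 J4 :: "real mat"
    and D :: "real mat"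
  assumes "n \<ge> 1" and "m \<ge> 1"
    and "B \<in> carrier_mat n m" and "C \<in> carrier_mat m n"
    and "\<forall>j<m. 0 \<le> lo j \<and> lo j \<le> hi j"
    and "indefinite n J2" and "neg_semidef n J4"
    and "\<exists>kb. neg_def n (kb^2 \<cdot>\<^sub>m J2 + kb^4 \<cdot>\<^sub>m J4)"
    and "\<forall>E \<in> Dset m lo hi.
           det (map_mat of_int B * E * map_mat of_int C) = 0 \<and>
           num_neg_re_eigs (map_mat of_int B * E * map_mat of_int C) = n - 1"
    and "\<exists>v :: real vec \<in> carrier_vec n. v \<noteq> 0\<^sub>v n \<and> (\<forall>i<n. v $ i \<ge> 0) \<and>
           transpose_mat (map_mat of_int B) *\<^sub>v v = 0\<^sub>v m"
    and "D \<in> Dset m lo hi"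
    and "initially_positive (\<lambda>k. det (- Mk B C J2 J4 D k))"
  shows "\<exists>kt > 0. \<forall>k. 0 < k \<and> k \<le> kt \<longrightarrow> rho B C J2 J4 D k < 0"
proof -
  \<comment> \<open>Only the dimensions of \<open>J2\<close>, \<open>J4\<close> enter.\<close>
  define A0 :: "real mat" where "A0 = map_mat of_int B * D * map_mat of_int C"
  have J2: "J2 \<in> carrier_mat n n" and J4: "J4 \<in> carrier_mat n n"
    using assms(6,7) by (auto simp: indefinite_def neg_semidef_def sym_mat_def)
  have A0: "A0 \<in> carrier_mat n n"
    using assms(3,4,11) by (auto simp: A0_def Dset_def)
  have M_entry: "Mk B C J2 J4 D t $$ (i,j) = A0 $$ (i,j) + t^2 * J2 $$ (i,j) + t^4 * J4 $$ (i,j)"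
    if "i < n" "j < n" for t i j
    using that A0 J2 J4 by (simp add: Mk_def A0_def[symmetric])
  have "((\<lambda>t. Mk B C J2 J4 D t $$ (i,j)) \<longlongrightarrow> A0 $$ (i,j)) (at_right 0)" if "i < n" "j < n" for i j
    unfolding M_entry[OF that] by (auto intro!: tendsto_eq_intros)
  moreover have "Mk B C J2 J4 D t \<in> carrier_mat n n" for t
    using A0 J2 J4 by (simp add: Mk_def A0_def[symmetric])
  moreover have "\<forall>\<^sub>F t in at_right 0. det (- Mk B C J2 J4 D t) > 0"
    using assms(12) by (auto simp: initially_positive_def eventually_at_right_field)
  ultimately have "\<forall>\<^sub>F t in at_right 0. rho B C J2 J4 D t < 0"
    unfolding rho_def using assms(1,9,11) A0
    by (intro eventually_spectral_abscissa_neg[of n _ A0]) (auto simp: A0_def)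
  then obtain b where "b > 0" "\<And>t. 0 < t \<Longrightarrow> t < b \<Longrightarrow> rho B C J2 J4 D t < 0"
    by (auto simp: eventually_at_right_field)
  then show ?thesis
    by (intro exI[of _ "b / 2"]) auto
qed

end
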